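(* Let $M\in\mathbb{R}^{n\times n}$ be a P-matrix. Then $M$ is a K-matrix if and only if for every $q\in\mathbb{R}^n$ such that $(M,q)$ is nondegenerate, the USO induced by $\mathrm{LCP}(M,q)$ is locally uniform.
   Context: For $v\in\{0,1\}^n$ and $I\subseteq[n]$, $v\oplus I$ flips the coordinates of $v$ in $I$; $v\oplus i=v\oplus\{i\}$. The $n$-cube has vertex set $\{0,1\}^n$ and edges $\{v,v\oplus i\}$; a unique-sink orientation (USO) is an orientation in which every subcube has exactly one sink. A P-matrix is a square real matrix with all principal minors positive; a K-matrix is a P-matrix whose off-diagonal entries are all non-positive. For $B\subseteq[n]$, $A_B$ is the matrix whose $i$th column is the $i$th column of $-M$ if $i\in B$ and of $I_n$ otherwise; $B(v)=\{j:v_j=1\}$. $(M,q)$ is nondegenerate if $(A_B^{-1}q)_i\ne0$ for all $B,i$; the USO induced by $\mathrm{LCP}(M,q)$ is given by $v\to v\oplus i$ iff $(A_{B(v)}^{-1}q)_i<0$. A USO is locally uniform if (i) whenever $u_i=u_j=0$ ($i\ne j$), $u\to u\oplus i$ and $u\to u\oplus j$, then $u\oplus i\to u\oplus\{i,j\}$ and $u\oplus j\to u\oplus\{i,j\}$; and (ii) whenever $u_i=u_j=0$, $u\oplus i\to u$ and $u\oplus j\to u$, then $u\oplus\{i,j\}\to u\oplus i$ and $u\oplus\{i,j\}\to u\oplus j$. *)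

theory Defs
  imports "Jordan_Normal_Form.DL_Rank_Submatrix" "Jordan_Normal_Form.Gauss_Jordan_Elimination"
          "Jordan_Normal_Form.Determinant"
begin

text \<open>Vertices of the n-cube {0,1}^n are represented by the sets B(v) = {j. v_j = 1},
  i.e. by subsets of {0..<n}; v xor I is symmetric difference.\<close>

definition cube_vertices :: "nat \<Rightarrow> nat set set" where
  "cube_vertices n = Pow {0..<n}"

definition flip :: "nat set \<Rightarrow> nat \<Rightarrow> nat set" where
  "flip v i = (if i \<in> v then v - {i} else insert i v)"

definition P_matrix :: "real mat \<Rightarrow> nat \<Rightarrow> bool" where
  "P_matrix M n \<longleftrightarrow> M \<in> carrier_mat n n \<and>
     (\<forall>S. S \<subseteq> {0..<n} \<and> S \<noteq> {} \<longrightarrow> det (submatrix M S S) > 0)"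

definition K_matrix :: "real mat \<Rightarrow> nat \<Rightarrow> bool" where
  "K_matrix M n \<longleftrightarrow> P_matrix M n \<and>
     (\<forall>i<n. \<forall>j<n. i \<noteq> j \<longrightarrow> M $$ (i, j) \<le> 0)"

definition A_mat :: "real mat \<Rightarrow> nat \<Rightarrow> nat set \<Rightarrow> real mat" where
  "A_mat M n B = mat n n (\<lambda>(i, j). if j \<in> B then - (M $$ (i, j)) else (1\<^sub>m n) $$ (i, j))"

definition mat_inv :: "real mat \<Rightarrow> real mat" where
  "mat_inv A = the (mat_inverse A)"

definition lcp_vec :: "real mat \<Rightarrow> nat \<Rightarrow> real vec \<Rightarrow> nat set \<Rightarrow> real vec" where
  "lcp_vec M n q B = mat_inv (A_mat M n B) *\<^sub>v q"

definition nondegenerate :: "real mat \<Rightarrow> nat \<Rightarrow> real vec \<Rightarrow> bool" where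
  "nondegenerate M n q \<longleftrightarrow>
     (\<forall>B. B \<subseteq> {0..<n} \<longrightarrow> (\<forall>i<n. lcp_vec M n q B $ i \<noteq> 0))"

definition lcp_arc :: "real mat \<Rightarrow> nat \<Rightarrow> real vec \<Rightarrow> nat set \<Rightarrow> nat \<Rightarrow> bool" where
  "lcp_arc M n q v i \<longleftrightarrow> lcp_vec M n q v $ i < 0"

text \<open>An orientation of the n-cube is given by arc v i meaning v \<rightarrow> flip v i.\<close>
definition locally_uniform :: "nat \<Rightarrow> (nat set \<Rightarrow> nat \<Rightarrow> bool) \<Rightarrow> bool" where
  "locally_uniform n arc \<longleftrightarrow>
     (\<forall>u \<in> cube_vertices n. \<forall>i<n. \<forall>j<n. i \<noteq> j \<and> i \<notin> u \<and> j \<notin> u \<longrightarrow>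
        ((arc u i \<and> arc u j) \<longrightarrow>
           (arc (flip u i) j \<and> arc (flip u j) i)) \<and>
        ((arc (flip u i) i \<and> arc (flip u j) j) \<longrightarrow>
           (arc (flip (flip u i) j) j \<and> arc (flip (flip u i) j) i)))"

end

theory Submission
  imports Defs "HOL-Computational_Algebra.Polynomial"
begin

(* Let x(B) = A_B^{-1} q denote the vector at the vertex B of the cube.
   1. det A_B = (-1)^|B| det M_BB, so for a P-matrix every A_B is invertible and
      x(B) is the unique solution of A_B x = q.
   2. Pivoting on k (B to B + k) is a rank-one update: with c = A_B^{-1}(-M e_k),
      x(B)_k = x(B+k)_k c_k and x(B)_j = x(B+k)_j + x(B+k)_k c_j for j <> k.
      By Cramer's rule c_k = -det M_{B+k} / det M_B < 0, hence the edge
      between B and B + k is consistently oriented.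
   3. If M is a K-matrix, the off-pivot entries c_j are nonnegative (induction
      on B); combined with 2 this yields both conditions of local uniformity.
   4. Conversely, if M_ab > 0 for some a <> b, the vertex {} with q_a, q_b < 0
      and q_a - q_b M_ab / M_bb > 0 violates condition (i).  Such a q can be
      chosen nondegenerate, because along the curve q0 + (t, t^2, ..., t^n)
      every entry of every x(B) is a nonzero polynomial in t, so only finitely
      many t are degenerate. *)

section \<open>The determinant of A_B\<close>

lemma pick_image_strict_mono:
  fixes f :: "nat \<Rightarrow> nat"
  assumes f: "strict_mono f" and t: "t < card S"
  shows "pick (f ` S) t = f (pick S t)"
proof -
  let ?x = "pick S t"
  have xS: "?x \<in> S" using pick_in_set_le[OF t] .
  have "{a \<in> f ` S. a < f ?x} = f ` {a\<in>S. a < ?x}"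
    using f by (auto simp: strict_mono_less)
  moreover have "card (f ` {a\<in>S. a < ?x}) = t"
    using card_pick_le[OF t] card_image strict_mono_imp_inj_on[OF f]
    by (metis inj_on_subset subset_UNIV)
  ultimately have "card {a \<in> f ` S. a < f ?x} = t" by simp
  then show ?thesis using pick_card_in_set[of "f ?x" "f ` S"] xS by auto
qed

lemma strict_mono_insert_index: "strict_mono (insert_index l)"
  unfolding strict_mono_def insert_index_def by auto

lemma submatrix_full:
  assumes "M \<in> carrier_mat n n"
  shows "submatrix M {0..<n} {0..<n} = M"
proof -
  have pick_id: "pick {0..<n} i = i" if "i < n" for i
    using pick_card_in_set[of i "{0..<n}"] that
    by (metis (no_types, lifting) atLeastLessThan_iff card_lessThan lessThan_def
        mem_Collect_eq order_less_trans zero_le Collect_cong)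
  show ?thesis
    by (rule eq_matI) (use assms pick_id in \<open>auto simp: submatrix_def\<close>)
qed

lemma A_mat_carrier [simp]: "A_mat M n B \<in> carrier_mat n n"
  by (simp add: A_mat_def)

lemma A_mat_dim [simp]: "dim_row (A_mat M n B) = n" "dim_col (A_mat M n B) = n"
  by (simp_all add: A_mat_def)

lemma A_mat_delete:
  assumes M: "M \<in> carrier_mat (Suc m) (Suc m)" and l: "l < Suc m" "l \<notin> B"
  shows "mat_delete (A_mat M (Suc m) B) l l =
           A_mat (mat_delete M l l) m {i. i < m \<and> insert_index l i \<in> B}"
proof (rule eq_matI)
  fix i j assume "i < dim_row (A_mat (mat_delete M l l) m {i. i < m \<and> insert_index l i \<in> B})"
    "j < dim_col (A_mat (mat_delete M l l) m {i. i < m \<and> insert_index l i \<in> B})"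
  then have ij: "i < m" "j < m" by (auto simp: A_mat_def)
  have inj: "(insert_index l i = insert_index l j) = (i = j)"
    using strict_mono_imp_inj_on[OF strict_mono_insert_index] by (auto dest: injD)
  have idx: "insert_index l i < Suc m" "insert_index l j < Suc m"
    using ij by (auto simp: insert_index_def)
  have "mat_delete (A_mat M (Suc m) B) l l $$ (i, j)
      = A_mat M (Suc m) B $$ (insert_index l i, insert_index l j)"
    using mat_delete_index[OF A_mat_carrier l(1) l(1) ij] by simp
  moreover have "mat_delete M l l $$ (i, j) = M $$ (insert_index l i, insert_index l j)"
    using mat_delete_index[OF M l(1) l(1) ij] by simp
  ultimately show "mat_delete (A_mat M (Suc m) B) l l $$ (i, j) =
        A_mat (mat_delete M l l) m {i. i < m \<and> insert_index l i \<in> B} $$ (i, j)"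
    using ij idx inj by (simp add: A_mat_def)
qed (auto simp: A_mat_def mat_delete_def)

lemma submatrix_delete_reindex:
  assumes M: "M \<in> carrier_mat (Suc m) (Suc m)" and l: "l < Suc m"
    and B: "B \<subseteq> {0..<Suc m}" and B': "insert_index l ` B' = B" "B' \<subseteq> {0..<m}"
  shows "submatrix (mat_delete M l l) B' B' = submatrix M B B"
proof -
  have cardB: "card B' = card B"
    using B' strict_mono_imp_inj_on[OF strict_mono_insert_index]
    by (metis card_image inj_on_subset subset_UNIV)
  have c1: "card {i. i < m \<and> i \<in> B'} = card B'" and c2: "card {i. i < Suc m \<and> i \<in> B} = card B"
    using B B' by (metis (no_types, lifting) Collect_cong Collect_mem_eq atLeastLessThan_iff subsetD)+
  have M': "mat_delete M l l \<in> carrier_mat m m" using M by (simp add: mat_delete_def)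
  show ?thesis
  proof (rule eq_matI)
    fix i j assume "i < dim_row (submatrix M B B)" "j < dim_col (submatrix M B B)"
    then have ij: "i < card B'" "j < card B'" using c2 cardB M by (auto simp: dim_submatrix)
    then have "pick B' i < m" "pick B' j < m"
      using pick_in_set_le[OF ij(1)] pick_in_set_le[OF ij(2)] B'(2) by auto
    then have "submatrix (mat_delete M l l) B' B' $$ (i, j)
        = M $$ (insert_index l (pick B' i), insert_index l (pick B' j))"
      using ij c1 M' M by (subst submatrix_index) (auto simp: mat_delete_def insert_index_def)
    also have "\<dots> = M $$ (pick B i, pick B j)"
      using pick_image_strict_mono[OF strict_mono_insert_index ij(1)]
        pick_image_strict_mono[OF strict_mono_insert_index ij(2)] by (simp add: B'(1)[symmetric])
    also have "\<dots> = submatrix M B B $$ (i, j)"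
      using ij c2 cardB M by (intro submatrix_index[symmetric]) auto
    finally show "submatrix (mat_delete M l l) B' B' $$ (i, j) = submatrix M B B $$ (i, j)" .
  qed (use c1 c2 cardB M M' in \<open>simp_all add: dim_submatrix\<close>)
qed

text \<open>The basic determinant identity: expanding along the unit columns outside B
  leaves the principal submatrix of -M on B.\<close>
lemma det_A_mat:
  assumes "M \<in> carrier_mat n n" "B \<subseteq> {0..<n}"
  shows "det (A_mat M n B) = (-1) ^ card B * det (submatrix M B B)"
  using assms
proof (induction n arbitrary: M B)
  case 0
  then have "B = {}" by auto
  then show ?case using 0 by (simp add: A_mat_def submatrix_def det_def)
next
  case (Suc m)
  show ?case
  proof (cases "B = {0..<Suc m}")
    case True
    have "A_mat M (Suc m) B = (-1) \<cdot>\<^sub>m M"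
      by (rule eq_matI) (use Suc.prems True in \<open>auto simp: A_mat_def\<close>)
    then show ?thesis using Suc.prems True submatrix_full[OF Suc.prems(1)] by simp
  next
    case False
    then obtain l where l: "l < Suc m" "l \<notin> B"
      using Suc.prems(2) by (meson atLeastLessThan_iff le0 subsetI subset_antisym)
    define A where "A = A_mat M (Suc m) B"
    define B' where "B' = {i. i < m \<and> insert_index l i \<in> B}"
    have A: "A \<in> carrier_mat (Suc m) (Suc m)" by (simp add: A_def)
    have "det A = (\<Sum>i<Suc m. A $$ (i, l) * cofactor A i l)"
      by (rule laplace_expansion_column[OF A l(1)])
    also have "\<dots> = (\<Sum>i<Suc m. if i = l then cofactor A l l else 0)"
      by (rule sum.cong) (auto simp: A_def A_mat_def l)
    finally have expand: "det A = det (mat_delete A l l)" using l by (simp add: cofactor_def)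
    have B'_img: "insert_index l ` B' = B"
    proof
      show "B \<subseteq> insert_index l ` B'"
      proof
        fix b assume b: "b \<in> B"
        then have "b \<noteq> l" using l by auto
        then have "insert_index l (delete_index l b) = b" "delete_index l b < m"
          using b l Suc.prems by (auto simp: insert_delete_index delete_index_def)
        then show "b \<in> insert_index l ` B'" using b unfolding B'_def by (metis (mono_tags) image_eqI mem_Collect_eq)
      qed
    qed (auto simp: B'_def)
    have B'_sub: "B' \<subseteq> {0..<m}" by (auto simp: B'_def)
    have "card B' = card B"
      using B'_img strict_mono_imp_inj_on[OF strict_mono_insert_index]
      by (metis card_image inj_on_subset subset_UNIV)
    moreover have "det (A_mat (mat_delete M l l) m B') = (-1) ^ card B' * det (submatrix M B B)"
      using Suc.IH[of "mat_delete M l l" B'] Suc.prems B'_sub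
        submatrix_delete_reindex[OF Suc.prems(1) l(1) Suc.prems(2) B'_img B'_sub]
      by (simp add: mat_delete_def)
    ultimately show ?thesis
      using expand A_mat_delete[OF Suc.prems(1) l] by (simp add: A_def B'_def)
  qed
qed

section \<open>The vectors A_B^{-1} q for a P-matrix\<close>

lemma P_matrix_carrier: "P_matrix M n \<Longrightarrow> M \<in> carrier_mat n n"
  by (simp add: P_matrix_def)

text \<open>Principal minors of a P-matrix are positive, including the empty one.\<close>
lemma P_matrix_minor_pos:
  assumes P: "P_matrix M n" and B: "B \<subseteq> {0..<n}"
  shows "det (submatrix M B B) > 0"
proof (cases "B = {}")
  case True
  have "submatrix M {} {} = 1\<^sub>m 0" by (rule eq_matI) (auto simp: submatrix_def)
  then show ?thesis using True by simp
qed (use P B in \<open>auto simp: P_matrix_def\<close>)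

lemma A_mat_inverse:
  assumes P: "P_matrix M n" and B: "B \<subseteq> {0..<n}"
  shows "A_mat M n B * mat_inv (A_mat M n B) = 1\<^sub>m n"
    and "mat_inv (A_mat M n B) * A_mat M n B = 1\<^sub>m n"
    and "mat_inv (A_mat M n B) \<in> carrier_mat n n"
proof -
  have "det (A_mat M n B) \<noteq> 0"
    using det_A_mat[OF P_matrix_carrier[OF P] B] P_matrix_minor_pos[OF P B] by simp
  then have "A_mat M n B \<in> Units (ring_mat TYPE(real) n ())"
    by (rule det_non_zero_imp_unit[OF A_mat_carrier])
  then obtain X where X: "mat_inverse (A_mat M n B) = Some X"
    using mat_inverse(1)[OF A_mat_carrier, of M n B "()"] by (cases "mat_inverse (A_mat M n B)") auto
  show "A_mat M n B * mat_inv (A_mat M n B) = 1\<^sub>m n"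
    and "mat_inv (A_mat M n B) * A_mat M n B = 1\<^sub>m n"
    and "mat_inv (A_mat M n B) \<in> carrier_mat n n"
    using mat_inverse(2)[OF A_mat_carrier X] X by (simp_all add: mat_inv_def)
qed

lemma lcp_vec_carrier:
  assumes "P_matrix M n" "B \<subseteq> {0..<n}" "q \<in> carrier_vec n"
  shows "lcp_vec M n q B \<in> carrier_vec n"
  using A_mat_inverse(3)[OF assms(1,2)] assms(3) unfolding lcp_vec_def by simp

lemma lcp_vec_solves:
  assumes P: "P_matrix M n" and B: "B \<subseteq> {0..<n}" and q: "q \<in> carrier_vec n"
  shows "A_mat M n B *\<^sub>v lcp_vec M n q B = q"
proof -
  have "A_mat M n B *\<^sub>v lcp_vec M n q B = (A_mat M n B * mat_inv (A_mat M n B)) *\<^sub>v q"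
    unfolding lcp_vec_def using A_mat_inverse(3)[OF P B] q by (metis assoc_mult_mat_vec A_mat_carrier)
  then show ?thesis using A_mat_inverse(1)[OF P B] q by simp
qed

lemma lcp_vec_unique:
  assumes P: "P_matrix M n" and B: "B \<subseteq> {0..<n}" and x: "x \<in> carrier_vec n"
    and eq: "A_mat M n B *\<^sub>v x = q"
  shows "lcp_vec M n q B = x"
proof -
  have "lcp_vec M n q B = (mat_inv (A_mat M n B) * A_mat M n B) *\<^sub>v x"
    unfolding lcp_vec_def eq[symmetric] using A_mat_inverse(3)[OF P B] x
    by (metis assoc_mult_mat_vec A_mat_carrier)
  then show ?thesis using A_mat_inverse(2)[OF P B] x by simp
qed

lemma lcp_vec_empty:
  assumes P: "P_matrix M n" and q: "q \<in> carrier_vec n"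
  shows "lcp_vec M n q {} = q"
proof -
  have "A_mat M n {} = 1\<^sub>m n" by (rule eq_matI) (auto simp: A_mat_def)
  then show ?thesis using lcp_vec_unique[OF P _ q] q by simp
qed

section \<open>Pivoting\<close>

lemma A_mat_insert_mult:
  assumes k: "k < n" "k \<notin> B" and y: "y \<in> carrier_vec n" and M: "M \<in> carrier_mat n n"
  shows "A_mat M n (insert k B) *\<^sub>v y =
    A_mat M n B *\<^sub>v vec n (\<lambda>j. if j = k then 0 else y $ j) + (y $ k) \<cdot>\<^sub>v (- col M k)"
proof (rule eq_vecI)
  fix r assume "r < dim_vec (A_mat M n B *\<^sub>v vec n (\<lambda>j. if j = k then 0 else y $ j) + (y $ k) \<cdot>\<^sub>v (- col M k))"
  then have r: "r < n" using M by simp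
  have "(A_mat M n (insert k B) *\<^sub>v y) $ r = (\<Sum>j\<in>{0..<n}. A_mat M n (insert k B) $$ (r, j) * y $ j)"
    using r y by (simp add: scalar_prod_def row_def)
  also have "\<dots> = (\<Sum>j\<in>{0..<n}. A_mat M n B $$ (r, j) * (if j = k then 0 else y $ j)
        + (if j = k then - M $$ (r, k) * y $ k else 0))"
    by (rule sum.cong) (use r k in \<open>auto simp: A_mat_def\<close>)
  also have "\<dots> = (A_mat M n B *\<^sub>v vec n (\<lambda>j. if j = k then 0 else y $ j) + (y $ k) \<cdot>\<^sub>v (- col M k)) $ r"
    using r M k by (simp add: sum.distrib scalar_prod_def row_def)
  finally show "(A_mat M n (insert k B) *\<^sub>v y) $ r =
      (A_mat M n B *\<^sub>v vec n (\<lambda>j. if j = k then 0 else y $ j) + (y $ k) \<cdot>\<^sub>v (- col M k)) $ r" .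
qed (use M in simp)

lemma lcp_vec_pivot:
  assumes P: "P_matrix M n" and B: "B \<subseteq> {0..<n}" and k: "k < n" "k \<notin> B"
    and q: "q \<in> carrier_vec n"
  shows "lcp_vec M n q B $ k = lcp_vec M n q (insert k B) $ k * lcp_vec M n (- col M k) B $ k"
    and "j < n \<Longrightarrow> j \<noteq> k \<Longrightarrow> lcp_vec M n q B $ j =
        lcp_vec M n q (insert k B) $ j + lcp_vec M n q (insert k B) $ k * lcp_vec M n (- col M k) B $ j"
proof -
  have M: "M \<in> carrier_mat n n" using P_matrix_carrier[OF P] .
  have Bk: "insert k B \<subseteq> {0..<n}" using B k by auto
  have mc: "- col M k \<in> carrier_vec n" using M k by simp
  define y where "y = lcp_vec M n q (insert k B)"
  define c where "c = lcp_vec M n (- col M k) B"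
  define z where "z = vec n (\<lambda>j. if j = k then 0 else y $ j) + (y $ k) \<cdot>\<^sub>v c"
  have y: "y \<in> carrier_vec n" "A_mat M n (insert k B) *\<^sub>v y = q"
    unfolding y_def using lcp_vec_carrier[OF P Bk q] lcp_vec_solves[OF P Bk q] by auto
  have c: "c \<in> carrier_vec n" "A_mat M n B *\<^sub>v c = - col M k"
    unfolding c_def using lcp_vec_carrier[OF P B mc] lcp_vec_solves[OF P B mc] by auto
  have "A_mat M n B *\<^sub>v z = A_mat M n B *\<^sub>v vec n (\<lambda>j. if j = k then 0 else y $ j) + (y $ k) \<cdot>\<^sub>v (A_mat M n B *\<^sub>v c)"
    unfolding z_def using c
    by (simp add: mult_add_distrib_mat_vec[OF A_mat_carrier] mult_mat_vec[OF A_mat_carrier])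
  also have "\<dots> = q" using A_mat_insert_mult[OF k y(1) M] c y by simp
  finally have "lcp_vec M n q B = z"
    using lcp_vec_unique[OF P B] c by (simp add: z_def)
  then have x: "lcp_vec M n q B $ j = z $ j" if "j < n" for j by simp
  show "lcp_vec M n q B $ k = y $ k * c $ k" using x[OF k(1)] k c by (simp add: z_def)
  show "j < n \<Longrightarrow> j \<noteq> k \<Longrightarrow> lcp_vec M n q B $ j = y $ j + y $ k * c $ j"
    using x c by (simp add: z_def)
qed

text \<open>By Cramer's rule the pivot entry is -det M_{B+k} / det M_B, negative for a P-matrix.\<close>
lemma pivot_entry_neg:
  assumes P: "P_matrix M n" and B: "B \<subseteq> {0..<n}" and k: "k < n" "k \<notin> B"
  shows "lcp_vec M n (- col M k) B $ k < 0"
proof -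
  have M: "M \<in> carrier_mat n n" using P_matrix_carrier[OF P] .
  have Bk: "insert k B \<subseteq> {0..<n}" using B k by auto
  have mc: "- col M k \<in> carrier_vec n" using M k by simp
  define c where "c = lcp_vec M n (- col M k) B"
  have c: "c \<in> carrier_vec n" "A_mat M n B *\<^sub>v c = - col M k"
    unfolding c_def using lcp_vec_carrier[OF P B mc] lcp_vec_solves[OF P B mc] by auto
  have "replace_col (A_mat M n B) (- col M k) k = A_mat M n (insert k B)"
    by (rule eq_matI) (use M k in \<open>auto simp: replace_col_def A_mat_def\<close>)
  then have cramer: "det (A_mat M n (insert k B)) = c $ k * det (A_mat M n B)"
    using cramer_lemma_mat[OF A_mat_carrier c(1) k(1), of M B] c by simp
  have "card (insert k B) = Suc (card B)" using k B finite_subset[OF B] by simp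
  then have "(-1::real) ^ card B * (- det (submatrix M (insert k B) (insert k B)))
      = (-1) ^ card B * (c $ k * det (submatrix M B B))"
    using cramer det_A_mat[OF M Bk] det_A_mat[OF M B] by (simp add: algebra_simps)
  then have "- det (submatrix M (insert k B) (insert k B)) = c $ k * det (submatrix M B B)"
    by (simp only: mult_cancel_left power_eq_0_iff) simp
  then show ?thesis
    using P_matrix_minor_pos[OF P Bk] P_matrix_minor_pos[OF P B] unfolding c_def
    by (smt (verit) mult_nonneg_nonneg)
qed

text \<open>The edge between B and B+k is consistently oriented: B+k points to B
  exactly when B does not point to B+k.\<close>
lemma edge_orientation:
  assumes P: "P_matrix M n" and B: "B \<subseteq> {0..<n}" and k: "k < n" "k \<notin> B"
    and q: "q \<in> carrier_vec n"
  shows "lcp_vec M n q (insert k B) $ k < 0 \<longleftrightarrow> lcp_vec M n q B $ k > 0"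
  using lcp_vec_pivot(1)[OF P B k q] pivot_entry_neg[OF P B k]
  by (simp add: zero_less_mult_iff)

section \<open>K-matrices induce locally uniform orientations\<close>

text \<open>For a K-matrix all non-pivot entries of A_B^{-1}(-M e_i) outside B are
  nonnegative; at B = {} these are the entries -M_ji, and the pivot formula
  propagates the sign to larger B.\<close>
lemma K_pivot_column_nonneg:
  assumes K: "K_matrix M n" and B: "B \<subseteq> {0..<n}"
    and ij: "i < n" "j < n" "i \<notin> B" "j \<notin> B" "j \<noteq> i"
  shows "lcp_vec M n (- col M i) B $ j \<ge> 0"
proof -
  have P: "P_matrix M n" and off: "\<And>i j. i < n \<Longrightarrow> j < n \<Longrightarrow> i \<noteq> j \<Longrightarrow> M $$ (i, j) \<le> 0"
    using K by (auto simp: K_matrix_def)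
  have M: "M \<in> carrier_mat n n" using P_matrix_carrier[OF P] .
  have "finite B" using B finite_subset by blast
  then show ?thesis using B ij
  proof (induction B arbitrary: i j rule: finite_induct)
    case empty
    then show ?case using lcp_vec_empty[OF P, of "- col M i"] off[of j i] M by simp
  next
    case (insert k B)
    have B: "B \<subseteq> {0..<n}" and k: "k < n" using insert.prems by auto
    have mc: "- col M i \<in> carrier_vec n" using M insert.prems by simp
    define x where "x = lcp_vec M n (- col M i) B"
    define y where "y = lcp_vec M n (- col M i) (insert k B)"
    define c where "c = lcp_vec M n (- col M k) B"
    have r1: "x $ k = y $ k * c $ k" and r2: "x $ j = y $ j + y $ k * c $ j"
      using lcp_vec_pivot[OF P B k insert.hyps(2) mc] insert.prems
      unfolding x_def y_def c_def by auto
    have "c $ k < 0" using pivot_entry_neg[OF P B k insert.hyps(2)] by (simp add: c_def)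
    moreover have "x $ k \<ge> 0" "x $ j \<ge> 0" "c $ j \<ge> 0"
      using insert.IH[OF B] insert.prems k insert.hyps(2) by (auto simp: x_def c_def)
    ultimately have "y $ k \<le> 0" using r1 by (metis mult_pos_neg not_le)
    then have "y $ k * c $ j \<le> 0" using \<open>c $ j \<ge> 0\<close> by (simp add: mult_nonpos_nonneg)
    then show ?case using r2 \<open>x $ j \<ge> 0\<close> by (simp add: y_def)
  qed
qed

text \<open>For a K-matrix, pivoting on i moves every other entry j against the sign of
  the new i-th entry: y_j = x_j - y_i c_j with c_j \<ge> 0.\<close>
lemma K_pivot_shift:
  assumes K: "K_matrix M n" and B: "B \<subseteq> {0..<n}"
    and ij: "i < n" "j < n" "i \<notin> B" "j \<notin> B" "j \<noteq> i" and q: "q \<in> carrier_vec n"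
  shows "lcp_vec M n q (insert i B) $ i \<ge> 0 \<Longrightarrow> lcp_vec M n q (insert i B) $ j \<le> lcp_vec M n q B $ j"
    and "lcp_vec M n q (insert i B) $ i \<le> 0 \<Longrightarrow> lcp_vec M n q (insert i B) $ j \<ge> lcp_vec M n q B $ j"
proof -
  have P: "P_matrix M n" using K by (simp add: K_matrix_def)
  have shift: "lcp_vec M n q B $ j = lcp_vec M n q (insert i B) $ j
      + lcp_vec M n q (insert i B) $ i * lcp_vec M n (- col M i) B $ j"
    using lcp_vec_pivot(2)[OF P B ij(1,3) q ij(2,5)] .
  have c: "lcp_vec M n (- col M i) B $ j \<ge> 0" using K_pivot_column_nonneg[OF K B ij] .
  show "lcp_vec M n q (insert i B) $ i \<ge> 0 \<Longrightarrow> lcp_vec M n q (insert i B) $ j \<le> lcp_vec M n q B $ j"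
    using shift c by (simp add: mult_nonneg_nonneg)
  show "lcp_vec M n q (insert i B) $ i \<le> 0 \<Longrightarrow> lcp_vec M n q (insert i B) $ j \<ge> lcp_vec M n q B $ j"
    using shift c by (simp add: mult_nonpos_nonneg)
qed

lemma flip_notin: "i \<notin> u \<Longrightarrow> flip u i = insert i u"
  by (simp add: flip_def)

text \<open>The forward direction, valid even without nondegeneracy: condition (i) follows from
  the first case of the previous lemma, condition (ii) from the second one together with
  the consistent orientation of edges.\<close>
theorem K_matrix_locally_uniform:
  assumes K: "K_matrix M n" and q: "q \<in> carrier_vec n"
  shows "locally_uniform n (lcp_arc M n q)"
  unfolding locally_uniform_def
proof (intro ballI allI impI conjI)
  have P: "P_matrix M n" using K by (simp add: K_matrix_def)
  fix u i j assume u: "u \<in> cube_vertices n" and ij: "i < n" "j < n" "i \<noteq> j \<and> i \<notin> u \<and> j \<notin> u"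
  have U: "u \<subseteq> {0..<n}" using u by (simp add: cube_vertices_def)
  have Ui: "insert i u \<subseteq> {0..<n}" and Uj: "insert j u \<subseteq> {0..<n}" using U ij by auto
  note orient_i = edge_orientation[OF P U ij(1) _ q] and orient_j = edge_orientation[OF P U ij(2) _ q]
  note shift_i = K_pivot_shift[OF K U ij(1,2) _ _ _ q] and shift_j = K_pivot_shift[OF K U ij(2,1) _ _ _ q]
  have flips: "flip u i = insert i u" "flip u j = insert j u" "flip (insert i u) j = insert j (insert i u)"
    using ij by (simp_all add: flip_notin)
  have swap: "insert j (insert i u) = insert i (insert j u)" by auto
  {
    text \<open>(i) Both arcs leave u: the new i-th entry is positive, so the j-th entry decreases.\<close>
    assume out: "lcp_arc M n q u i \<and> lcp_arc M n q u j"
    have "lcp_vec M n q (insert i u) $ i > 0" "lcp_vec M n q (insert j u) $ j > 0"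
      using out ij lcp_vec_pivot(1)[OF P U ij(1) _ q] lcp_vec_pivot(1)[OF P U ij(2) _ q]
        pivot_entry_neg[OF P U ij(1)] pivot_entry_neg[OF P U ij(2)]
      by (auto simp: lcp_arc_def mult_less_0_iff)
    then show "lcp_arc M n q (flip u i) j" "lcp_arc M n q (flip u j) i"
      using out shift_i(1) shift_j(1) ij by (auto simp: flips lcp_arc_def)
  next
    text \<open>(ii) Both arcs enter u: the j-th entry stays positive after pivoting on i,
      so the edge from u+i to u+i+j points down.\<close>
    assume into: "lcp_arc M n q (flip u i) i \<and> lcp_arc M n q (flip u j) j"
    then have yi: "lcp_vec M n q (insert i u) $ i < 0" and yj: "lcp_vec M n q (insert j u) $ j < 0"
      by (simp_all add: flips lcp_arc_def)
    then have "lcp_vec M n q u $ i > 0" "lcp_vec M n q u $ j > 0" using orient_i orient_j ij by auto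
    then have "lcp_vec M n q (insert i u) $ j > 0" "lcp_vec M n q (insert j u) $ i > 0"
      using shift_i(2) shift_j(2) yi yj ij by fastforce+
    then show "lcp_arc M n q (flip (flip u i) j) j" "lcp_arc M n q (flip (flip u i) j) i"
      using edge_orientation[OF P Ui ij(2) _ q] edge_orientation[OF P Uj ij(1) _ q] ij
      by (auto simp: flips swap lcp_arc_def)
  }
qed

section \<open>Nondegenerate right-hand sides are dense\<close>

lemma inverse_row_nonzero:
  assumes P: "P_matrix M n" and B: "B \<subseteq> {0..<n}" and k: "k < n"
  shows "\<exists>m<n. row (mat_inv (A_mat M n B)) k $ m \<noteq> 0"
proof (rule ccontr)
  assume "\<not> ?thesis"
  then have "row (mat_inv (A_mat M n B)) k \<bullet> col (A_mat M n B) k = 0"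
    unfolding scalar_prod_def by simp
  moreover have "row (mat_inv (A_mat M n B)) k \<bullet> col (A_mat M n B) k = 1"
    using arg_cong[OF A_mat_inverse(2)[OF P B], of "\<lambda>X. X $$ (k, k)"] A_mat_inverse(3)[OF P B] k
    by simp
  ultimately show False by simp
qed

text \<open>Along the moment curve t \<mapsto> q0 + (t, t^2, ..., t^n) each entry of each x(B) is a
  nonzero polynomial in t, so only finitely many points of the curve are degenerate.\<close>
lemma degenerate_parameters_finite:
  assumes P: "P_matrix M n" and q0: "q0 \<in> carrier_vec n"
  shows "finite {t. \<not> nondegenerate M n (q0 + vec n (\<lambda>m. t ^ Suc m))}"
proof -
  define r where "r B k = row (mat_inv (A_mat M n B)) k" for B k
  define p where "p B k = [: r B k \<bullet> q0 :] + (\<Sum>m\<in>{0..<n}. monom (r B k $ m) (Suc m))" for B k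
  have entry_poly: "lcp_vec M n (q0 + vec n (\<lambda>m. t ^ Suc m)) B $ k = poly (p B k) t"
    if B: "B \<subseteq> {0..<n}" and k: "k < n" for B k t
  proof -
    have "lcp_vec M n (q0 + vec n (\<lambda>m. t ^ Suc m)) B $ k = r B k \<bullet> (q0 + vec n (\<lambda>m. t ^ Suc m))"
      unfolding lcp_vec_def r_def using A_mat_inverse(3)[OF P B] k q0 by simp
    also have "\<dots> = r B k \<bullet> q0 + (\<Sum>m\<in>{0..<n}. r B k $ m * t ^ Suc m)"
      using q0 A_mat_inverse(3)[OF P B]
      by (simp add: scalar_prod_def r_def distrib_left sum.distrib)
    also have "\<dots> = poly (p B k) t" by (simp add: p_def poly_sum poly_monom)
    finally show ?thesis .
  qed
  have p_nonzero: "p B k \<noteq> 0" if B: "B \<subseteq> {0..<n}" and k: "k < n" for B k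
  proof
    assume "p B k = 0"
    obtain m where m: "m < n" "r B k $ m \<noteq> 0"
      using inverse_row_nonzero[OF P B k] by (auto simp: r_def)
    have "coeff (p B k) (Suc m) = r B k $ m" using m by (simp add: p_def coeff_sum)
    then show False using \<open>p B k = 0\<close> m by simp
  qed
  have "{t. \<not> nondegenerate M n (q0 + vec n (\<lambda>m. t ^ Suc m))}
      \<subseteq> (\<Union>B\<in>Pow {0..<n}. \<Union>k\<in>{0..<n}. {t. poly (p B k) t = 0})"
  proof
    fix t assume "t \<in> {t. \<not> nondegenerate M n (q0 + vec n (\<lambda>m. t ^ Suc m))}"
    then obtain B k where B: "B \<subseteq> {0..<n}" and k: "k < n"
        and "lcp_vec M n (q0 + vec n (\<lambda>m. t ^ Suc m)) B $ k = 0"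
      unfolding nondegenerate_def by blast
    then have "poly (p B k) t = 0" using entry_poly[OF B k] by simp
    then show "t \<in> (\<Union>B\<in>Pow {0..<n}. \<Union>k\<in>{0..<n}. {t. poly (p B k) t = 0})"
      using B k by (intro UN_I[of B] UN_I[of k]) auto
  qed
  moreover have "finite (\<Union>B\<in>Pow {0..<n}. \<Union>k\<in>{0..<n}. {t. poly (p B k) t = 0})"
    using p_nonzero poly_roots_finite by (intro finite_UN_I) auto
  ultimately show ?thesis by (rule finite_subset)
qed

lemma nondegenerate_perturbation:
  assumes P: "P_matrix M n" and q0: "q0 \<in> carrier_vec n" and \<delta>: "\<delta> > 0"
  shows "\<exists>q\<in>carrier_vec n. nondegenerate M n q \<and> (\<forall>m<n. q0 $ m < q $ m \<and> q $ m < q0 $ m + \<delta>)"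
proof -
  have "min 1 \<delta> > 0" using \<delta> by simp
  then obtain t where t: "t \<in> {0<..<min 1 \<delta>}"
      "t \<notin> {t. \<not> nondegenerate M n (q0 + vec n (\<lambda>m. t ^ Suc m))}"
    using infinite_Ioo degenerate_parameters_finite[OF P q0] by (meson finite_subset subsetI)
  have small: "0 < t ^ Suc m" "t ^ Suc m < \<delta>" for m
  proof -
    have "t ^ m \<le> 1" using t(1) by (simp add: power_le_one)
    then have "t ^ Suc m \<le> t" using t(1) by (simp add: mult_left_le)
    then show "t ^ Suc m < \<delta>" using t(1) by (simp only: greaterThanLessThan_iff) linarith
    show "0 < t ^ Suc m" using t(1) by simp
  qed
  show ?thesis
    using t(2) small q0 by (intro bexI[of _ "q0 + vec n (\<lambda>m. t ^ Suc m)"]) auto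
qed

section \<open>Locally uniform orientations force a K-matrix\<close>

text \<open>Diagonal entries of a P-matrix are positive (the pivot entry at B = {}).\<close>
lemma P_matrix_diag_pos:
  assumes P: "P_matrix M n" and b: "b < n"
  shows "M $$ (b, b) > 0"
proof -
  have "lcp_vec M n (- col M b) {} $ b < 0" using pivot_entry_neg[OF P _ b] by simp
  then show ?thesis using lcp_vec_empty[OF P, of "- col M b"] P_matrix_carrier[OF P] b by simp
qed

lemma lcp_vec_singleton:
  assumes P: "P_matrix M n" and q: "q \<in> carrier_vec n" and ab: "a < n" "b < n" "a \<noteq> b"
  shows "lcp_vec M n q {b} $ a = q $ a - q $ b * M $$ (a, b) / M $$ (b, b)"
proof -
  have M: "M \<in> carrier_mat n n" using P_matrix_carrier[OF P] .
  have c: "lcp_vec M n (- col M b) {} = - col M b" using lcp_vec_empty[OF P] M ab by simp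
  have origin: "{} \<subseteq> {0..<n}" "b \<notin> {}" by auto
  have "q $ b = - lcp_vec M n q {b} $ b * M $$ (b, b)"
    using lcp_vec_pivot(1)[OF P origin(1) ab(2) origin(2) q] lcp_vec_empty[OF P q] c M ab by simp
  moreover have "q $ a = lcp_vec M n q {b} $ a - lcp_vec M n q {b} $ b * M $$ (a, b)"
    using lcp_vec_pivot(2)[OF P origin(1) ab(2) origin(2) q ab(1,3)] lcp_vec_empty[OF P q] c M ab by simp
  ultimately show ?thesis using P_matrix_diag_pos[OF P ab(2)] by (simp add: field_simps)
qed

text \<open>If M_ab > 0, choose q with q_a, q_b < 0 (so the origin is a source on the face
  spanned by a and b) but q_a - q_b M_ab / M_bb > 0; then the arc from {b} to {a,b}
  points the wrong way for condition (i).\<close>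
lemma locally_uniform_offdiag_nonpos:
  assumes P: "P_matrix M n"
    and LU: "\<forall>q \<in> carrier_vec n. nondegenerate M n q \<longrightarrow> locally_uniform n (lcp_arc M n q)"
    and ab: "a < n" "b < n" "a \<noteq> b"
  shows "M $$ (a, b) \<le> 0"
proof (rule ccontr)
  assume "\<not> M $$ (a, b) \<le> 0"
  define c where "c = M $$ (a, b) / M $$ (b, b)"
  have c: "c > 0" using \<open>\<not> M $$ (a, b) \<le> 0\<close> P_matrix_diag_pos[OF P ab(2)] by (simp add: c_def)
  define \<delta> where "\<delta> = min (1/2) (c/2)"
  have \<delta>: "\<delta> > 0" "\<delta> \<le> 1/2" "\<delta> \<le> c/2" using c by (auto simp: \<delta>_def)
  define q0 where "q0 = vec n (\<lambda>m. if m = b then -1 else if m = a then - c/2 else (0::real))"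
  obtain q where q: "q \<in> carrier_vec n" "nondegenerate M n q"
      and near: "\<forall>m<n. q0 $ m < q $ m \<and> q $ m < q0 $ m + \<delta>"
    using nondegenerate_perturbation[OF P _ \<delta>(1), of q0] by (auto simp: q0_def)
  have qb: "-1 < q $ b" "q $ b < -1 + \<delta>" and qa: "- c/2 < q $ a" "q $ a < - c/2 + \<delta>"
    using near ab by (auto simp: q0_def)
  have "(1 - \<delta>) * c < - q $ b * c" using qb c by (intro mult_strict_right_mono) auto
  moreover have "\<delta> * c \<le> c / 2" using mult_right_mono[OF \<delta>(2), of c] c by simp
  then have "c / 2 \<le> (1 - \<delta>) * c" by (simp add: algebra_simps)
  ultimately have wrong_sign: "q $ a - q $ b * c > 0" using qa by linarith
  have "lcp_arc M n q {} b" "lcp_arc M n q {} a"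
    using qb qa \<delta> lcp_vec_empty[OF P q(1)] by (auto simp: lcp_arc_def)
  then have "lcp_arc M n q (flip {} b) a"
    using LU q ab unfolding locally_uniform_def by (force simp: cube_vertices_def)
  then have "lcp_vec M n q {b} $ a < 0" by (simp add: lcp_arc_def flip_def)
  then show False using lcp_vec_singleton[OF P q(1) ab] wrong_sign by (simp add: c_def)
qed

theorem mainTheorem7:
  fixes M :: "real mat" and n :: nat
  assumes "P_matrix M n"
  shows "K_matrix M n \<longleftrightarrow>
    (\<forall>q \<in> carrier_vec n. nondegenerate M n q \<longrightarrow> locally_uniform n (lcp_arc M n q))"
proof
  assume "K_matrix M n"
  then show "\<forall>q \<in> carrier_vec n. nondegenerate M n q \<longrightarrow> locally_uniform n (lcp_arc M n q)"
    using K_matrix_locally_uniform by blast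
next
  assume "\<forall>q \<in> carrier_vec n. nondegenerate M n q \<longrightarrow> locally_uniform n (lcp_arc M n q)"
  then have "\<forall>i<n. \<forall>j<n. i \<noteq> j \<longrightarrow> M $$ (i, j) \<le> 0"
    using locally_uniform_offdiag_nonpos[OF assms] by blast
  then show "K_matrix M n" using assms by (simp add: K_matrix_def)
qed

end
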